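(* Let $G$ be a non-complete double-critical $k$-chromatic graph and let $x\in V(G)$ with $\deg_G(x)=k+1$. Then every component of the complement $\overline{G_x}$ is either an isolated vertex or a cycle, there is at least one cycle component, and every cycle component has length at least $5$.
   Context: All graphs are finite and simple. A graph $G$ is (vertex-)critical if $\chi(G-v)<\chi(G)$ for every vertex $v\in V(G)$. A critical graph $G$ is double-critical if $\chi(G-x-y)\le\chi(G)-2$ for every edge $xy\in E(G)$. For a vertex $x$, $G_x:=G[N(x)]$ denotes the subgraph induced by the neighbourhood of $x$, and $\overline{G_x}$ its complement graph. *)

theory Defs
  imports Main
begin

definition graph :: "'a set \<Rightarrow> ('a \<Rightarrow> 'a \<Rightarrow> bool) \<Rightarrow> bool" where
  "graph V E \<longleftrightarrow> finite V \<and> (\<forall>x y. E x y \<longrightarrow> x \<in> V \<and> y \<in> V \<and> x \<noteq> y \<and> E y x)"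

definition colouring :: "'a set \<Rightarrow> ('a \<Rightarrow> 'a \<Rightarrow> bool) \<Rightarrow> nat \<Rightarrow> ('a \<Rightarrow> nat) \<Rightarrow> bool" where
  "colouring V E k f \<longleftrightarrow> f ` V \<subseteq> {..<k} \<and> (\<forall>x\<in>V. \<forall>y\<in>V. E x y \<longrightarrow> f x \<noteq> f y)"

text \<open>Chromatic number of the subgraph induced by V (so chi (V - S) E is the
  chromatic number of G - S).\<close>
definition chi :: "'a set \<Rightarrow> ('a \<Rightarrow> 'a \<Rightarrow> bool) \<Rightarrow> nat" where
  "chi V E = (LEAST k. \<exists>f. colouring V E k f)"

definition critical :: "'a set \<Rightarrow> ('a \<Rightarrow> 'a \<Rightarrow> bool) \<Rightarrow> bool" where
  "critical V E \<longleftrightarrow> (\<forall>v\<in>V. chi (V - {v}) E < chi V E)"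

definition double_critical :: "'a set \<Rightarrow> ('a \<Rightarrow> 'a \<Rightarrow> bool) \<Rightarrow> bool" where
  "double_critical V E \<longleftrightarrow> critical V E \<and>
     (\<forall>x y. E x y \<longrightarrow> chi (V - {x, y}) E \<le> chi V E - 2)"

definition complete_graph :: "'a set \<Rightarrow> ('a \<Rightarrow> 'a \<Rightarrow> bool) \<Rightarrow> bool" where
  "complete_graph V E \<longleftrightarrow> (\<forall>x\<in>V. \<forall>y\<in>V. x \<noteq> y \<longrightarrow> E x y)"

definition nbhd :: "'a set \<Rightarrow> ('a \<Rightarrow> 'a \<Rightarrow> bool) \<Rightarrow> 'a \<Rightarrow> 'a set" where
  "nbhd V E x = {y\<in>V. E x y}"

definition degree :: "'a set \<Rightarrow> ('a \<Rightarrow> 'a \<Rightarrow> bool) \<Rightarrow> 'a \<Rightarrow> nat" where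
  "degree V E x = card (nbhd V E x)"

definition compl_edges :: "('a \<Rightarrow> 'a \<Rightarrow> bool) \<Rightarrow> 'a \<Rightarrow> 'a \<Rightarrow> bool" where
  "compl_edges E u v \<longleftrightarrow> u \<noteq> v \<and> \<not> E u v"

definition component_of :: "'a set \<Rightarrow> ('a \<Rightarrow> 'a \<Rightarrow> bool) \<Rightarrow> 'a \<Rightarrow> 'a set" where
  "component_of V E u = {v\<in>V. (\<lambda>a b. a \<in> V \<and> b \<in> V \<and> E a b)\<^sup>*\<^sup>* u v}"

definition components :: "'a set \<Rightarrow> ('a \<Rightarrow> 'a \<Rightarrow> bool) \<Rightarrow> 'a set set" where
  "components V E = component_of V E ` V"

text \<open>Its length is then n = card K.\<close>
definition is_cycle_graph :: "'a set \<Rightarrow> ('a \<Rightarrow> 'a \<Rightarrow> bool) \<Rightarrow> bool" where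
  "is_cycle_graph K E \<longleftrightarrow> (\<exists>vs. distinct vs \<and> set vs = K \<and> length vs \<ge> 3 \<and>
     (\<forall>i<length vs. \<forall>j<length vs.
        E (vs ! i) (vs ! j) \<longleftrightarrow> (j = Suc i mod length vs \<or> i = Suc j mod length vs)))"

end

theory Submission
  imports Defs
begin

text \<open>
  Let \<open>k = \<chi>(G)\<close> and \<open>N = N(x)\<close>. For \<open>z \<in> N\<close>, double-criticality gives a
  \<open>(k-2)\<close>-colouring of \<open>G - x - z\<close>, and since \<open>G\<close> is not \<open>(k-1)\<close>-colourable every colour
  class contains a common neighbour of \<open>x\<close> and \<open>z\<close> (otherwise recolour). So \<open>z\<close> is adjacent
  to at least \<open>k-2\<close> of the other \<open>k\<close> vertices of \<open>N\<close>, i.e. has degree at most 2 in the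
  complement of \<open>G\<^sub>x\<close>; and every complement-neighbour \<open>a\<close> of \<open>z\<close> has a complement-neighbour
  \<open>s \<in> N\<close> which is adjacent to \<open>z\<close> and has the colour of \<open>a\<close>. Hence all complement degrees
  are 0 or 2, so the components are isolated vertices and cycles; there is a cycle because the
  \<open>k+1\<close> vertices of \<open>N\<close> do not form a clique. On a triangle or a 4-cycle through \<open>z\<close> the
  vertex \<open>s\<close> is forced to be the far vertex of the cycle, which is complement-adjacent to \<open>z\<close>
  in a triangle, and in a 4-cycle gives the two (adjacent in \<open>G\<close>) neighbours of \<open>z\<close> the same
  colour.
\<close>

lemma successively_iff_nth:
  "successively P xs \<longleftrightarrow> (\<forall>i. Suc i < length xs \<longrightarrow> P (xs ! i) (xs ! Suc i))"
  by (induction P xs rule: successively.induct) (auto simp: nth_Cons split: nat.splits)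

definition closed_walk :: "('a \<Rightarrow> 'a \<Rightarrow> bool) \<Rightarrow> 'a list \<Rightarrow> bool" where
  "closed_walk R vs \<longleftrightarrow> (\<forall>i<length vs. R (vs ! i) (vs ! (Suc i mod length vs)))"

locale max_degree_two =
  fixes N :: "'a set" and R :: "'a \<Rightarrow> 'a \<Rightarrow> bool"
  assumes finite_N: "finite N"
    and sym: "R a b \<Longrightarrow> R b a"
    and degree_le_two: "a \<in> N \<Longrightarrow> card {b\<in>N. R a b} \<le> 2"
begin

lemma third_neighbour:
  assumes "a \<in> N" "p \<in> N" "q \<in> N" "s \<in> N" "R a p" "R a q" "R a s" "p \<noteq> q"
  shows "s = p \<or> s = q"
proof (rule ccontr)
  assume "\<not> (s = p \<or> s = q)"
  then have "card {p, q, s} = 3" using assms by auto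
  moreover have "card {p, q, s} \<le> card {b\<in>N. R a b}"
    using assms finite_N by (intro card_mono) auto
  ultimately show False using degree_le_two[OF \<open>a \<in> N\<close>] by linarith
qed

lemma closed_walk_neighbour:
  assumes vs: "distinct vs" "set vs \<subseteq> N" "3 \<le> length vs" "closed_walk R vs"
    and i: "i < length vs" and b: "b \<in> N" "R (vs ! i) b"
  shows "\<exists>j<length vs. b = vs ! j \<and> (j = Suc i mod length vs \<or> i = Suc j mod length vs)"
proof -
  define n where "n = length vs"
  define p where "p = (if i = 0 then n - 1 else i - 1)"
  have p: "p < n" "Suc p mod n = i" "Suc i mod n \<noteq> p" "Suc i mod n < n"
    using i vs(3) unfolding p_def n_def by (auto simp: mod_Suc)
  have "R (vs ! i) (vs ! (Suc i mod n))" "R (vs ! i) (vs ! p)"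
    using vs(4) i p unfolding closed_walk_def n_def by (auto intro: sym)
  moreover have "vs ! (Suc i mod n) \<noteq> vs ! p"
    using vs(1) p by (simp add: nth_eq_iff_index_eq n_def)
  ultimately have "b = vs ! (Suc i mod n) \<or> b = vs ! p"
    using third_neighbour vs(2) i p b unfolding n_def by (meson nth_mem subsetD)
  then show ?thesis using p unfolding n_def by blast
qed

lemma closed_walk_is_cycle_graph:
  assumes vs: "distinct vs" "set vs \<subseteq> N" "3 \<le> length vs" "closed_walk R vs"
  shows "is_cycle_graph (set vs) R"
  unfolding is_cycle_graph_def
proof (intro exI conjI allI impI)
  fix i j assume ij: "i < length vs" "j < length vs"
  show "R (vs ! i) (vs ! j) \<longleftrightarrow> (j = Suc i mod length vs \<or> i = Suc j mod length vs)"
  proof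
    assume "R (vs ! i) (vs ! j)"
    then obtain j' where "j' < length vs" "vs ! j = vs ! j'"
        "j' = Suc i mod length vs \<or> i = Suc j' mod length vs"
      using closed_walk_neighbour[OF vs ij(1)] vs(2) ij(2) by (meson nth_mem subsetD)
    then show "j = Suc i mod length vs \<or> i = Suc j mod length vs"
      using vs(1) ij(2) by (simp add: nth_eq_iff_index_eq)
  next
    assume "j = Suc i mod length vs \<or> i = Suc j mod length vs"
    then show "R (vs ! i) (vs ! j)"
      using vs(4) ij unfolding closed_walk_def by (auto intro: sym)
  qed
qed (use vs in auto)

lemma closed_walk_component:
  assumes vs: "distinct vs" "set vs \<subseteq> N" "3 \<le> length vs" "closed_walk R vs"
  shows "component_of N R (hd vs) = set vs"
proof -
  let ?R = "\<lambda>a b. a \<in> N \<and> b \<in> N \<and> R a b"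
  have "?R\<^sup>*\<^sup>* (hd vs) (vs ! i)" if "i < length vs" for i
    using that
  proof (induction i)
    case 0 then show ?case by (simp add: hd_conv_nth)
  next
    case (Suc i)
    then have "?R (vs ! i) (vs ! Suc i)"
      using vs(2,4) unfolding closed_walk_def by (metis Suc_lessD mod_less nth_mem subsetD)
    with Suc show ?case by (simp add: rtranclp.rtrancl_into_rtrancl)
  qed
  moreover have "v \<in> set vs" if "?R\<^sup>*\<^sup>* (hd vs) v" for v
    using that
  proof (induction rule: rtranclp_induct)
    case base then show ?case using vs(3) by (cases vs) auto
  next
    case (step a b)
    then obtain i where "i < length vs" "a = vs ! i" by (auto simp: in_set_conv_nth)
    with step closed_walk_neighbour[OF vs] show ?case by (metis nth_mem)
  qed
  ultimately show ?thesis
    using vs(2) unfolding component_of_def by (auto simp: in_set_conv_nth)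
qed

end

lemma component_of_isolated:
  assumes "u \<in> N" "\<not> (\<exists>b\<in>N. R u b)"
  shows "component_of N R u = {u}"
proof -
  have "v = u" if "(\<lambda>a b. a \<in> N \<and> b \<in> N \<and> R a b)\<^sup>*\<^sup>* u v" for v
    using that by (rule converse_rtranclpE) (use assms in auto)
  with assms(1) show ?thesis unfolding component_of_def by auto
qed

lemma components_subset: "K \<in> components N R \<Longrightarrow> K \<subseteq> N"
  unfolding components_def component_of_def by blast

locale degree_zero_or_two = max_degree_two +
  assumes irrefl: "\<not> R a a"
    and no_leaf: "a \<in> N \<Longrightarrow> b \<in> N \<Longrightarrow> R a b \<Longrightarrow> \<exists>c\<in>N. R a c \<and> c \<noteq> b"
begin

text \<open>The last vertex has a second neighbour on the walk; an interior vertex cannot be it, as it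
  would then have three neighbours, so it is the first one.\<close>

lemma maximal_walk_closes:
  assumes vs: "distinct vs" "set vs \<subseteq> N" "successively R vs" "2 \<le> length vs"
    and maximal: "\<And>t. t \<in> N \<Longrightarrow> R (last vs) t \<Longrightarrow> t \<in> set vs"
  shows "3 \<le> length vs \<and> R (last vs) (hd vs)"
proof -
  define l where "l = length vs - 1"
  have "vs \<noteq> []" using vs(4) by auto
  then have l: "l < length vs" "vs ! l = last vs" "vs ! (l - 1) \<noteq> vs ! l"
    using vs(1,4) last_conv_nth[of vs] unfolding l_def by (auto simp: nth_eq_iff_index_eq)
  have walk: "R (vs ! i) (vs ! Suc i)" if "Suc i < length vs" for i
    using vs(3) that by (simp add: successively_iff_nth)
  have inN: "vs ! i \<in> N" if "i < length vs" for i
    using vs(2) that by auto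
  have "Suc (l - 1) = l" using vs(4) unfolding l_def by simp
  then have "R (vs ! l) (vs ! (l - 1))"
    using walk[of "l - 1"] l(1) by (simp add: sym)
  moreover have "l - 1 < length vs" using l(1) by linarith
  ultimately obtain c where c: "c \<in> N" "R (vs ! l) c" "c \<noteq> vs ! (l - 1)"
    using no_leaf[OF inN[OF l(1)] inN] by blast
  then obtain j where j: "j < length vs" "c = vs ! j"
    using maximal l(2) by (metis in_set_conv_nth)
  have "j \<noteq> l" using c j irrefl by auto
  moreover have "j \<noteq> l - 1" using c j by auto
  ultimately have jl: "j + 1 < l" using j l_def by auto
  have "j = 0"
  proof (rule ccontr)
    assume "j \<noteq> 0"
    then have "R (vs ! j) (vs ! (j - 1))" "R (vs ! j) (vs ! Suc j)" "R (vs ! j) (vs ! l)"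
      using walk[of "j - 1"] walk[of j] jl l(1) c(2) j(2) by (auto intro: sym)
    moreover have "vs ! (j - 1) \<noteq> vs ! Suc j" "vs ! l \<noteq> vs ! (j - 1)" "vs ! l \<noteq> vs ! Suc j"
      using vs(1) jl l(1) by (auto simp: nth_eq_iff_index_eq)
    moreover have "j < length vs" "j - 1 < length vs" "Suc j < length vs"
      using jl l(1) by linarith+
    ultimately show False
      using third_neighbour[OF inN inN inN inN, of j "j - 1" "Suc j" l] l(1) by blast
  qed
  then show ?thesis
    using c j jl l vs(4) unfolding l_def by (auto simp: hd_conv_nth)
qed

lemma closed_walk_through_edge:
  assumes u: "u \<in> N" "b \<in> N" "R u b"
  shows "\<exists>vs. distinct vs \<and> set vs \<subseteq> N \<and> 3 \<le> length vs \<and> hd vs = u \<and> closed_walk R vs"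
proof -
  define S where "S = {vs. distinct vs \<and> set vs \<subseteq> N \<and> vs \<noteq> [] \<and> hd vs = u \<and> successively R vs}"
  have "[u] \<in> S" using u unfolding S_def by auto
  moreover have "length vs < Suc (card N)" if "vs \<in> S" for vs
  proof -
    have "length vs = card (set vs)" using that distinct_card unfolding S_def by fastforce
    also have "\<dots> \<le> card N" using that finite_N card_mono unfolding S_def by blast
    finally show ?thesis by simp
  qed
  ultimately obtain vs where vs: "vs \<in> S" and longest: "\<And>ws. ws \<in> S \<Longrightarrow> length ws \<le> length vs"
    using ex_has_greatest_nat[of "\<lambda>vs. vs \<in> S" "[u]" length "Suc (card N)"] by blast
  have maximal: "t \<in> set vs" if "t \<in> N" "R (last vs) t" for t
  proof (rule ccontr)
    assume "t \<notin> set vs"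
    then have "vs @ [t] \<in> S"
      using vs that unfolding S_def by (auto simp: successively_append_iff)
    then show False using longest[of "vs @ [t]"] by simp
  qed
  have "2 \<le> length vs"
  proof (rule ccontr)
    assume "\<not> 2 \<le> length vs"
    then have "vs = [u]" using vs unfolding S_def by (cases vs) (auto simp: Suc_le_eq)
    then show False using maximal[of b] u irrefl by auto
  qed
  then have closes: "3 \<le> length vs \<and> R (last vs) (hd vs)"
    using maximal_walk_closes maximal vs unfolding S_def by blast
  have "closed_walk R vs"
    unfolding closed_walk_def
  proof (intro allI impI)
    fix i assume i: "i < length vs"
    show "R (vs ! i) (vs ! (Suc i mod length vs))"
    proof (cases "Suc i < length vs")
      case True then show ?thesis using vs unfolding S_def by (simp add: successively_iff_nth)
    next
      case False
      then have "i = length vs - 1" "vs \<noteq> []" using i by auto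
      then show ?thesis using closes by (simp add: last_conv_nth hd_conv_nth)
    qed
  qed
  with vs closes show ?thesis unfolding S_def by blast
qed

lemma component_of_is_cycle_graph:
  assumes "u \<in> N" "b \<in> N" "R u b"
  shows "is_cycle_graph (component_of N R u) R"
proof -
  obtain vs where vs: "distinct vs" "set vs \<subseteq> N" "3 \<le> length vs" "hd vs = u" "closed_walk R vs"
    using closed_walk_through_edge[OF assms] by blast
  then have "component_of N R u = set vs"
    using closed_walk_component by blast
  with vs show ?thesis using closed_walk_is_cycle_graph by simp
qed

lemma component_isolated_or_cycle:
  assumes "K \<in> components N R"
  shows "card K = 1 \<or> is_cycle_graph K R"
proof -
  obtain u where u: "u \<in> N" "K = component_of N R u"
    using assms unfolding components_def by blast
  show ?thesis
  proof (cases "\<exists>b\<in>N. R u b")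
    case True
    then obtain b where "b \<in> N" "R u b" by blast
    with u show ?thesis using component_of_is_cycle_graph[OF u(1)] by simp
  next
    case False
    then show ?thesis using component_of_isolated[of u N R, OF u(1) False] u(2) by simp
  qed
qed

lemma cycle_component_exists:
  assumes "a \<in> N" "b \<in> N" "R a b"
  shows "\<exists>K\<in>components N R. is_cycle_graph K R"
proof
  show "component_of N R a \<in> components N R" using assms(1) unfolding components_def by simp
qed (rule component_of_is_cycle_graph[OF assms])

end

lemma colouring_chi:
  assumes "finite W" "\<And>a b. E a b \<Longrightarrow> a \<noteq> b"
  shows "\<exists>f. colouring W E (chi W E) f"
proof -
  obtain h where h: "bij_betw h W {0..<card W}"
    using ex_bij_betw_finite_nat[OF assms(1)] by blast
  then have "colouring W E (card W) h"
    using assms(2) unfolding colouring_def bij_betw_def inj_on_def by auto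
  then show ?thesis
    unfolding chi_def by (rule LeastI[where P = "\<lambda>k. \<exists>f. colouring W E k f", OF exI])
qed

lemma chi_le: "colouring W E m f \<Longrightarrow> chi W E \<le> m"
  unfolding chi_def by (rule Least_le) blast

lemma colouring_mono: "colouring W E m f \<Longrightarrow> m \<le> m' \<Longrightarrow> colouring W E m' f"
  unfolding colouring_def by auto

lemma colouring_proper: "colouring W E m c \<Longrightarrow> u \<in> W \<Longrightarrow> v \<in> W \<Longrightarrow> E u v \<Longrightarrow> c u \<noteq> c v"
  unfolding colouring_def by blast

lemma clique_card_le_chi:
  assumes "graph V E" "Q \<subseteq> V" "\<And>a b. a \<in> Q \<Longrightarrow> b \<in> Q \<Longrightarrow> a \<noteq> b \<Longrightarrow> E a b"
  shows "card Q \<le> chi V E"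
proof -
  obtain f where f: "colouring V E (chi V E) f"
    using colouring_chi assms(1) unfolding graph_def by blast
  have "inj_on f Q"
  proof (rule inj_onI, rule ccontr)
    fix a b assume "a \<in> Q" "b \<in> Q" "f a = f b" "a \<noteq> b"
    then show False using f assms(2,3) unfolding colouring_def by blast
  qed
  moreover have "f ` Q \<subseteq> {..<chi V E}"
    using f assms(2) unfolding colouring_def by auto
  ultimately show ?thesis using card_inj_on_le[of f Q "{..<chi V E}"] by simp
qed

text \<open>Otherwise give \<open>x\<close> colour \<open>a\<close>, \<open>y\<close> a new colour \<open>m\<close>, and move the neighbours of
  \<open>x\<close> of colour \<open>a\<close> to \<open>m\<close>: a proper colouring of \<open>G\<close> with \<open>m + 1\<close> colours.\<close>

lemma colour_class_meets_common_nbhd: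
  assumes G: "graph V E" and xy: "E x y" and c: "colouring (V - {x, y}) E m c"
    and chi: "Suc m < chi V E" and a: "a < m"
  shows "\<exists>s\<in>V - {x, y}. c s = a \<and> E x s \<and> E y s"
proof (rule ccontr)
  assume none: "\<not> ?thesis"
  define f where "f v = (if v = x then a else if v = y then m
                          else if c v = a \<and> E x v then m else c v)" for v
  have "colouring V E (Suc m) f"
    unfolding colouring_def
  proof (intro conjI ballI impI subsetI)
    fix t assume "t \<in> f ` V"
    then show "t \<in> {..<Suc m}"
      using a c unfolding f_def colouring_def by auto
  next
    fix u v assume uv: "u \<in> V" "v \<in> V" "E u v"
    have "E v u" "u \<noteq> v" "x \<noteq> y" using G uv(3) xy unfolding graph_def by auto
    then show "f u \<noteq> f v"
      using uv xy none a c unfolding f_def colouring_def by (auto 0 3)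
  qed
  then show False using chi chi_le by fastforce
qed

lemma double_critical_edge_colouring:
  assumes G: "graph V E" and dc: "double_critical V E" and xy: "E x y"
  shows "\<exists>c. colouring (V - {x, y}) E (chi V E - 2) c \<and>
           (\<forall>a < chi V E - 2. \<exists>s\<in>V - {x, y}. c s = a \<and> E x s \<and> E y s)"
proof -
  have fin: "finite V" and irr: "\<And>u v. E u v \<Longrightarrow> u \<noteq> v"
    using G unfolding graph_def by auto
  obtain f where "colouring V E (chi V E) f"
    using colouring_chi[OF fin irr] by blast
  moreover have "x \<in> V" "y \<in> V"
    using G xy unfolding graph_def by auto
  ultimately have "f x < chi V E" "f y < chi V E" "f x \<noteq> f y"
    using xy unfolding colouring_def by auto
  then have "Suc (chi V E - 2) < chi V E" by linarith
  moreover obtain c where "colouring (V - {x, y}) E (chi (V - {x, y}) E) c"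
    using colouring_chi[of "V - {x, y}" E] fin irr by blast
  moreover have "chi (V - {x, y}) E \<le> chi V E - 2"
    using dc xy unfolding double_critical_def by blast
  ultimately show ?thesis
    using colouring_mono colour_class_meets_common_nbhd[OF G xy] by blast
qed

locale double_critical_nbhd =
  fixes V :: "'a set" and E :: "'a \<Rightarrow> 'a \<Rightarrow> bool" and x :: 'a
  assumes graph: "graph V E" and double_critical: "double_critical V E"
    and degree_x: "degree V E x = chi V E + 1"
begin

abbreviation N :: "'a set" where "N \<equiv> nbhd V E x"

abbreviation R :: "'a \<Rightarrow> 'a \<Rightarrow> bool" where "R \<equiv> compl_edges E"

lemma finite_nbhd: "finite N"
  using graph unfolding graph_def nbhd_def by auto

lemma card_nbhd: "card N = chi V E + 1"
  using degree_x unfolding degree_def .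

lemma compl_edges_sym: "R a b \<Longrightarrow> R b a"
  using graph unfolding compl_edges_def graph_def by blast

lemma nbhd_edge_colouring:
  assumes z: "z \<in> N"
  shows "\<exists>c. colouring (V - {x, z}) E (chi V E - 2) c \<and> (\<forall>a < chi V E - 2. \<exists>s\<in>N. c s = a \<and> E z s)"
proof -
  have "E x z" using z unfolding nbhd_def by auto
  from double_critical_edge_colouring[OF graph double_critical this] obtain c
    where "colouring (V - {x, z}) E (chi V E - 2) c"
      "\<forall>a < chi V E - 2. \<exists>s\<in>V - {x, z}. c s = a \<and> E x s \<and> E z s" by blast
  then show ?thesis unfolding nbhd_def by blast
qed

lemma compl_degree_le_two:
  assumes z: "z \<in> N"
  shows "card {b\<in>N. R z b} \<le> 2"
proof -
  obtain c where "colouring (V - {x, z}) E (chi V E - 2) c"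
    and c: "\<forall>a < chi V E - 2. \<exists>s\<in>N. c s = a \<and> E z s"
    using nbhd_edge_colouring[OF z] by blast
  define A where "A = {b\<in>N. R z b}"
  define B where "B = {b\<in>N. E z b}"
  have fin: "finite A" "finite B" using finite_nbhd unfolding A_def B_def by auto
  have "{..<chi V E - 2} \<subseteq> c ` B" using c unfolding B_def by force
  then have "card {..<chi V E - 2} \<le> card (c ` B)"
    using fin by (intro card_mono) auto
  also have "\<dots> \<le> card B"
    using fin by (intro card_image_le)
  finally have E_nbrs: "chi V E - 2 \<le> card B" by simp
  have "N = insert z (A \<union> B)" using z unfolding compl_edges_def A_def B_def by auto
  moreover have "z \<notin> A \<union> B"
    using graph unfolding compl_edges_def graph_def A_def B_def by auto
  moreover have "A \<inter> B = {}" unfolding compl_edges_def A_def B_def by auto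
  ultimately have "card N = Suc (card A + card B)"
    using fin by (simp add: card_Un_disjoint)
  then show ?thesis using card_nbhd E_nbrs unfolding A_def by linarith
qed

lemma compl_neighbour_twin:
  assumes z: "z \<in> N"
  shows "\<exists>c. colouring (V - {x, z}) E (chi V E - 2) c \<and>
           (\<forall>a\<in>N. R a z \<longrightarrow> (\<exists>s\<in>N. R a s \<and> E z s \<and> c s = c a))"
proof -
  obtain c where c: "colouring (V - {x, z}) E (chi V E - 2) c"
    and cover: "\<forall>a < chi V E - 2. \<exists>s\<in>N. c s = a \<and> E z s"
    using nbhd_edge_colouring[OF z] by blast
  have "\<exists>s\<in>N. R a s \<and> E z s \<and> c s = c a" if a: "a \<in> N" "R a z" for a
  proof -
    have V_x_z: "b \<in> V - {x, z}" if "b \<in> N" "b \<noteq> z" for b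
      using that graph unfolding nbhd_def graph_def by auto
    have a_V: "a \<in> V - {x, z}" using V_x_z a unfolding compl_edges_def by blast
    then have "c a < chi V E - 2" using c unfolding colouring_def by auto
    then obtain s where s: "s \<in> N" "c s = c a" "E z s"
      using cover by blast
    have "s \<noteq> z" using s(3) graph unfolding graph_def by blast
    then have "\<not> E a s"
      using colouring_proper[OF c a_V V_x_z[OF s(1)]] s(2) by auto
    moreover have "s \<noteq> a"
      using a(2) s(3) graph unfolding compl_edges_def graph_def by blast
    ultimately show ?thesis using s unfolding compl_edges_def by auto
  qed
  with c show ?thesis by blast
qed

sublocale degree_zero_or_two N R
proof
  show "finite N" by (rule finite_nbhd)
  show "R b a" if "R a b" for a b using that by (rule compl_edges_sym)
  show "card {b\<in>N. R a b} \<le> 2" if "a \<in> N" for a using that by (rule compl_degree_le_two)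
  show "\<not> R a a" for a unfolding compl_edges_def by simp
  show "\<exists>c\<in>N. R a c \<and> c \<noteq> b" if ab: "a \<in> N" "b \<in> N" "R a b" for a b
  proof -
    obtain c where "colouring (V - {x, b}) E (chi V E - 2) c"
      and "\<forall>a\<in>N. R a b \<longrightarrow> (\<exists>s\<in>N. R a s \<and> E b s \<and> c s = c a)"
      using compl_neighbour_twin[OF ab(2)] by blast
    then obtain s where "s \<in> N" "R a s" "E b s" using ab(1,3) by auto
    moreover have "s \<noteq> b" using \<open>E b s\<close> graph unfolding graph_def by blast
    ultimately show ?thesis by blast
  qed
qed

lemma compl_edge_exists: "\<exists>a\<in>N. \<exists>b\<in>N. R a b"
proof (rule ccontr)
  assume no_compl_edge: "\<not> ?thesis"
  have "card N \<le> chi V E"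
  proof (rule clique_card_le_chi[OF graph])
    show "N \<subseteq> V" unfolding nbhd_def by blast
    show "E a b" if "a \<in> N" "b \<in> N" "a \<noteq> b" for a b
      using no_compl_edge that unfolding compl_edges_def by blast
  qed
  then show False using card_nbhd by simp
qed

lemma compl_neighbour_twin_unique:
  assumes z: "z \<in> N"
  shows "\<exists>c. colouring (V - {x, z}) E (chi V E - 2) c \<and>
           (\<forall>a\<in>N. \<forall>w\<in>N. R a z \<longrightarrow> R a w \<longrightarrow> w \<noteq> z \<longrightarrow> E z w \<and> c w = c a)"
proof -
  obtain c where c: "colouring (V - {x, z}) E (chi V E - 2) c"
    and twin: "\<forall>a\<in>N. R a z \<longrightarrow> (\<exists>s\<in>N. R a s \<and> E z s \<and> c s = c a)"
    using compl_neighbour_twin[OF z] by blast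
  have "E z w \<and> c w = c a"
    if a: "a \<in> N" "w \<in> N" "R a z" "R a w" "w \<noteq> z" for a w
  proof -
    obtain s where s: "s \<in> N" "R a s" "E z s" "c s = c a" using twin a by blast
    have "s \<noteq> z" using s(3) graph unfolding graph_def by blast
    then have "s = w" using third_neighbour[OF a(1) z a(2) s(1) a(3,4) s(2)] a(5) by auto
    then show ?thesis using s by simp
  qed
  with c show ?thesis by blast
qed

lemma compl_cycle_card_ge_5:
  assumes K: "K \<subseteq> N" "is_cycle_graph K R"
  shows "5 \<le> card K"
proof -
  obtain vs where vs: "distinct vs" "set vs = K" "3 \<le> length vs"
    and adj: "\<And>i j. i < length vs \<Longrightarrow> j < length vs \<Longrightarrow>
                R (vs ! i) (vs ! j) \<longleftrightarrow> (j = Suc i mod length vs \<or> i = Suc j mod length vs)"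
    using K(2) unfolding is_cycle_graph_def by blast
  have inN: "vs ! i \<in> N" if "i < length vs" for i
    using vs(2) K(1) that by auto
  have V_x: "v \<in> V - {x}" if "v \<in> N" for v
    using that graph unfolding nbhd_def graph_def by auto
  define z where "z = vs ! 0"
  have z: "z \<in> N" unfolding z_def by (rule inN) (use vs(3) in linarith)
  obtain c where c: "colouring (V - {x, z}) E (chi V E - 2) c"
    and other: "\<forall>a\<in>N. \<forall>w\<in>N. R a z \<longrightarrow> R a w \<longrightarrow> w \<noteq> z \<longrightarrow> E z w \<and> c w = c a"
    using compl_neighbour_twin_unique[OF z] by blast
  have "length vs \<noteq> 3"
  proof
    assume n: "length vs = 3"
    have "R (vs ! 1) z" "R (vs ! 1) (vs ! 2)" "R z (vs ! 2)"
      using adj[of 1 0] adj[of 1 2] adj[of 0 2] n unfolding z_def by auto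
    moreover have "vs ! 2 \<noteq> z"
      using vs(1) n unfolding z_def by (simp add: nth_eq_iff_index_eq)
    moreover have "vs ! 1 \<in> N" "vs ! 2 \<in> N" using inN n by auto
    ultimately have "E z (vs ! 2)" using other[rule_format, of "vs ! 1" "vs ! 2"] by blast
    with \<open>R z (vs ! 2)\<close> show False unfolding compl_edges_def by simp
  qed
  moreover have "length vs \<noteq> 4"
  proof
    assume n: "length vs = 4"
    have R: "R (vs ! 1) z" "R (vs ! 1) (vs ! 2)" "R (vs ! 3) z" "R (vs ! 3) (vs ! 2)"
        "\<not> R (vs ! 1) (vs ! 3)"
      using adj[of 1 0] adj[of 1 2] adj[of 3 0] adj[of 3 2] adj[of 1 3] n unfolding z_def by auto
    have ne: "vs ! 2 \<noteq> z" "vs ! 1 \<noteq> vs ! 3" "vs ! 1 \<noteq> z" "vs ! 3 \<noteq> z"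
      using vs(1) n unfolding z_def by (auto simp: nth_eq_iff_index_eq)
    have N: "vs ! 1 \<in> N" "vs ! 2 \<in> N" "vs ! 3 \<in> N" using inN n by auto
    have "c (vs ! 1) = c (vs ! 3)"
      using other[rule_format, OF N(1,2) R(1,2) ne(1)]
        other[rule_format, OF N(3,2) R(3,4) ne(1)] by simp
    moreover have "E (vs ! 1) (vs ! 3)"
      using R(5) ne(2) unfolding compl_edges_def by simp
    moreover have "vs ! 1 \<in> V - {x, z}" "vs ! 3 \<in> V - {x, z}"
      using V_x N ne(3,4) by auto
    ultimately show False using colouring_proper[OF c] by blast
  qed
  ultimately show ?thesis using vs distinct_card by fastforce
qed

end

theorem proposition14:
  fixes V :: "'a set" and E :: "'a \<Rightarrow> 'a \<Rightarrow> bool" and k :: nat and x :: 'a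
  assumes "graph V E"
    and "\<not> complete_graph V E"
    and "double_critical V E"
    and "chi V E = k"
    and "x \<in> V"
    and "degree V E x = k + 1"
  shows "(\<forall>K\<in>components (nbhd V E x) (compl_edges E).
            card K = 1 \<or> is_cycle_graph K (compl_edges E))
       \<and> (\<exists>K\<in>components (nbhd V E x) (compl_edges E). is_cycle_graph K (compl_edges E))
       \<and> (\<forall>K\<in>components (nbhd V E x) (compl_edges E).
            is_cycle_graph K (compl_edges E) \<longrightarrow> card K \<ge> 5)"
proof -
  interpret double_critical_nbhd V E x
    using assms by unfold_locales simp_all
  show ?thesis
  proof (intro conjI ballI impI)
    fix K assume "K \<in> components N R"
    then show "card K = 1 \<or> is_cycle_graph K R" by (rule component_isolated_or_cycle)
  next
    obtain a b where "a \<in> N" "b \<in> N" "R a b" using compl_edge_exists by blast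
    then show "\<exists>K\<in>components N R. is_cycle_graph K R" by (rule cycle_component_exists)
  next
    fix K assume "K \<in> components N R" "is_cycle_graph K R"
    then show "5 \<le> card K" by (intro compl_cycle_card_ge_5 components_subset)
  qed
qed

end
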